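(* Let $k\ge2$, $a>2$, $n\ge2$, positive integers $p_1,\dots,p_k$, and real numbers $R_1^2,\dots,R_k^2\ge0$ with $\sum_{i=1}^kR_i^2<1$. Fix $m,j\in\{1,\dots,k\}$ (possibly $j=m$), and write $t_{-m}=\{t_i:i\ne m\}$. Let $f_1,f_2$ be the probability densities on $(0,1)$ defined by $$f_1(t_m)\propto\int_{(0,1)^{k-1}}\Big[\prod_{i=1}^k(1-t_i)^{\frac{a+p_i}{2}-2}\Big]\Big(1-\sum_{i=1}^kt_iR_i^2\Big)^{-\frac{n-1}{2}}dt_{-m},$$ $$f_2(t_m)\propto\int_{(0,1)^{k-1}}\Big[\prod_{i=1}^k(1-t_i)^{\frac{a+p_i}{2}-2}\Big](1-t_jR_j^2)^{-\frac{n-1}{2}}dt_{-m}.$$ Then $E_{f_1}(t_m)\ge E_{f_2}(t_m)$. Strict inequality holds when $R_m^2>0$ and $R_i^2>0$ for at least one $i\ne m$. *)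

theory Defs
  imports "HOL-Analysis.Analysis"
begin

text \<open>Indices run over {1..k}; a point of (0,1)^k is a function t :: nat \<Rightarrow> real.
  R2 i stands for R_i^2.\<close>

definition weight :: "nat \<Rightarrow> real \<Rightarrow> (nat \<Rightarrow> nat) \<Rightarrow> (nat \<Rightarrow> real) \<Rightarrow> real" where
  "weight k a p t = (\<Prod>i\<in>{1..k}. (1 - t i) powr ((a + real (p i)) / 2 - 2))"

definition g1 :: "nat \<Rightarrow> real \<Rightarrow> nat \<Rightarrow> (nat \<Rightarrow> nat) \<Rightarrow> (nat \<Rightarrow> real) \<Rightarrow> (nat \<Rightarrow> real) \<Rightarrow> real" where
  "g1 k a n p R2 t = weight k a p t * (1 - (\<Sum>i\<in>{1..k}. t i * R2 i)) powr (- (real n - 1) / 2)"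

definition g2 :: "nat \<Rightarrow> real \<Rightarrow> nat \<Rightarrow> (nat \<Rightarrow> nat) \<Rightarrow> (nat \<Rightarrow> real) \<Rightarrow> nat \<Rightarrow> (nat \<Rightarrow> real) \<Rightarrow> real" where
  "g2 k a n p R2 j t = weight k a p t * (1 - t j * R2 j) powr (- (real n - 1) / 2)"

definition marginal :: "nat \<Rightarrow> nat \<Rightarrow> ((nat \<Rightarrow> real) \<Rightarrow> real) \<Rightarrow> real \<Rightarrow> real" where
  "marginal k m g s =
     (LINT x : PiE ({1..k} - {m}) (\<lambda>_. {0<..<1::real}) | PiM ({1..k} - {m}) (\<lambda>_. lborel).
        g (x(m := s)))"

definition mean_prop :: "(real \<Rightarrow> real) \<Rightarrow> real" where
  "mean_prop h = (LBINT s : {0<..<1}. s * h s) / (LBINT s : {0<..<1}. h s)"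

end

theory Submission
  imports Defs
begin

text \<open>Integrating out \<open>t_{-m}\<close> writes both marginals as \<open>(1 - s)^{c_m} h_i(s)\<close>, where
  \<open>c_m = (a + p_m)/2 - 2\<close> and \<open>h_i(s)\<close> integrates the remaining factor against the Beta-type weight
  \<open>\<Prod>_{i \<noteq> m} (1 - t_i)^{c_i}\<close> on the open cube. So \<open>f_1\<close> is \<open>f_2\<close> tilted by \<open>r = h_1/h_2\<close>, and a
  positive nondecreasing tilt cannot decrease the mean: if \<open>\<mu>\<close> is the mean of \<open>f_2\<close>, the mean of
  \<open>f_1\<close> minus \<open>\<mu>\<close> is a positive multiple of \<open>\<integral> (s - \<mu>) (r s - r \<mu>) f_2(s) ds \<ge> 0\<close>.
  That \<open>r\<close> is nondecreasing comes from the exponent \<open>-(n-1)/2\<close> being negative: for \<open>j \<noteq> m\<close>,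
  \<open>h_2\<close> is constant and the integrand of \<open>h_1\<close> increases with \<open>s\<close>; for \<open>j = m\<close>, dividing out
  \<open>(1 - s R_m^2)^{-(n-1)/2}\<close> leaves \<open>(1 - \<Sum>_{i \<noteq> m} t_i R_i^2 / (1 - s R_m^2))^{-(n-1)/2}\<close>, again
  increasing in \<open>s\<close>. Strict increase on the whole cube gives the strict inequality.\<close>

lemma integral_less_if_less_on:
  fixes f g :: "'a \<Rightarrow> real"
  assumes f: "integrable M f" and g: "integrable M g"
    and le: "\<And>x. x \<in> space M \<Longrightarrow> f x \<le> g x" and less: "\<And>x. x \<in> A \<Longrightarrow> f x < g x"
    and A: "A \<in> sets M" "emeasure M A \<noteq> 0"
  shows "integral\<^sup>L M f < integral\<^sup>L M g"
proof -
  have int: "integrable M (\<lambda>x. g x - f x)" using f g by simp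
  have nonneg: "\<And>x. x \<in> space M \<Longrightarrow> 0 \<le> g x - f x" using le by simp
  have "\<not> (AE x in M. g x - f x = 0)"
  proof
    assume "AE x in M. g x - f x = 0"
    then have "AE x in M. x \<notin> A" by eventually_elim (use less in fastforce)
    moreover have "{x \<in> space M. \<not> x \<notin> A} = A" using sets.sets_into_space[OF A(1)] by auto
    ultimately have "emeasure M A = 0" using AE_iff_measurable[OF A(1), of "\<lambda>x. x \<notin> A"] by simp
    then show False using A(2) by simp
  qed
  then have "integral\<^sup>L M (\<lambda>x. g x - f x) \<noteq> 0"
    using integral_nonneg_eq_0_iff_AE[OF int] nonneg by auto
  moreover have "integral\<^sup>L M (\<lambda>x. g x - f x) \<ge> 0"
    using nonneg by (intro integral_nonneg_AE) auto
  ultimately show ?thesis using f g by simp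
qed

lemma set_integrable_unit_interval_mult_id:
  fixes f :: "real \<Rightarrow> real"
  assumes "set_integrable lborel {0<..<1} f"
  shows "set_integrable lborel {0<..<1} (\<lambda>s. s * f s)"
proof -
  have int: "integrable lborel (\<lambda>s. indicator {0<..<1::real} s * f s)"
    using assms by (simp add: set_integrable_def)
  then have "(\<lambda>s. s * (indicator {0<..<1::real} s * f s)) \<in> borel_measurable lborel"
    by measurable
  then show ?thesis unfolding set_integrable_def
    by (intro Bochner_Integration.integrable_bound[OF int _ AE_I2])
       (auto simp: indicator_def abs_mult mult_left_le_one_le mult.left_commute)
qed

lemma set_integrable_one_minus_powr:
  fixes c :: real
  assumes "c > -1"
  shows "set_integrable lborel {0<..<1} (\<lambda>t. (1 - t) powr c)"
proof -
  have "set_integrable lborel {0..1} (\<lambda>t::real. t powr (1 - 1) * (1 - t) powr ((c + 1) - 1))"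
    by (rule integrable_Beta) (use assms in auto)
  then have "set_integrable lborel {0<..<1} (\<lambda>t::real. t powr (1 - 1) * (1 - t) powr ((c + 1) - 1))"
    by (rule set_integrable_subset) auto
  then show ?thesis by (rule set_integrable_cong[THEN iffD1, rotated -1]) auto
qed

lemma set_integrable_one_minus_powr_mult_bounded:
  fixes c K :: real and q :: "real \<Rightarrow> real"
  assumes "c > -1" "q \<in> borel_measurable borel" "\<And>s. s \<in> {0<..<1} \<Longrightarrow> \<bar>q s\<bar> \<le> K"
  shows "set_integrable lborel {0<..<1} (\<lambda>s. (1 - s) powr c * q s)"
proof (rule set_integrable_bound[OF set_integrable_mult_left[OF set_integrable_one_minus_powr[OF assms(1)], of K]])
  show "set_borel_measurable lborel {0<..<1} (\<lambda>s. (1 - s) powr c * q s)"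
    using assms(2) unfolding set_borel_measurable_def by measurable
  have "\<bar>q s\<bar> \<le> \<bar>K\<bar>" if "s \<in> {0<..<1}" for s using assms(3)[OF that] by linarith
  then show "AE s in lborel. s \<in> {0<..<1} \<longrightarrow> norm ((1 - s) powr c * q s) \<le> norm ((1 - s) powr c * K)"
    by (auto simp: abs_mult mult_left_mono)
qed

lemma set_integral_unit_interval_pos:
  fixes f :: "real \<Rightarrow> real"
  assumes int: "set_integrable lborel {0<..<1} f"
    and nonneg: "\<And>s. s \<in> {0<..<1} \<Longrightarrow> f s \<ge> 0"
    and pos: "\<And>s. s \<in> {0<..<1} \<Longrightarrow> s \<noteq> c \<Longrightarrow> f s > 0"
  shows "(LBINT s:{0<..<1}. f s) > 0"
proof -
  have "emeasure lborel ({0<..<1::real} - {c}) = emeasure lborel {0<..<1::real}"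
    by (rule emeasure_Diff_null_set) auto
  then have nonnull: "emeasure lborel ({0<..<1::real} - {c}) \<noteq> 0" by simp
  have "integral\<^sup>L lborel (\<lambda>s::real. 0) < integral\<^sup>L lborel (\<lambda>s. indicator {0<..<1::real} s * f s)"
    by (rule integral_less_if_less_on[where A="{0<..<1} - {c}"])
       (use int nonneg pos nonnull in \<open>auto simp: set_integrable_def indicator_def\<close>)
  then show ?thesis by (simp add: set_lebesgue_integral_def)
qed

lemma mean_prop_cong:
  assumes "\<And>s. s \<in> {0<..<1} \<Longrightarrow> f s = g s"
  shows "mean_prop f = mean_prop g"
  unfolding mean_prop_def using assms
  by (simp add: set_lebesgue_integral_cong[of "{0<..<1}" lborel "\<lambda>s. s * f s" "\<lambda>s. s * g s"]
                set_lebesgue_integral_cong[of "{0<..<1}" lborel f g])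

lemma mean_prop_bounds:
  fixes f :: "real \<Rightarrow> real"
  assumes int: "set_integrable lborel {0<..<1} f" and pos: "\<And>s. s \<in> {0<..<1} \<Longrightarrow> f s > 0"
  shows "(LBINT s:{0<..<1}. f s) > 0" and "mean_prop f \<in> {0<..<1}"
proof -
  have sint: "set_integrable lborel {0<..<1} (\<lambda>s. s * f s)"
    using set_integrable_unit_interval_mult_id[OF int] .
  show F: "(LBINT s:{0<..<1}. f s) > 0"
    using int pos by (intro set_integral_unit_interval_pos[where c=0]) (auto intro: less_imp_le)
  have "(LBINT s:{0<..<1}. s * f s) > 0"
    using sint pos by (intro set_integral_unit_interval_pos[where c=0]) (auto intro: less_imp_le)
  moreover have "(LBINT s:{0<..<1}. f s - s * f s) > 0"
    using int sint pos
    by (intro set_integral_unit_interval_pos[where c=0])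
       (auto simp: algebra_simps intro: less_imp_le mult_left_le_one_le mult_strict_right_mono[of _ 1, simplified])
  ultimately show "mean_prop f \<in> {0<..<1}"
    using F int sint by (simp add: mean_prop_def)
qed

lemma mean_prop_mult_minus_mean_prop:
  fixes f r :: "real \<Rightarrow> real"
  assumes f: "set_integrable lborel {0<..<1} f"
    and fr: "set_integrable lborel {0<..<1} (\<lambda>s. f s * r s)"
    and F: "(LBINT s:{0<..<1}. f s) \<noteq> 0" and H: "(LBINT s:{0<..<1}. f s * r s) \<noteq> 0"
  defines "\<mu> \<equiv> mean_prop f"
  shows "mean_prop (\<lambda>s. f s * r s) - \<mu> =
    (LBINT s:{0<..<1}. (s - \<mu>) * (r s - r \<mu>) * f s) / (LBINT s:{0<..<1}. f s * r s)"
proof -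
  have sf: "set_integrable lborel {0<..<1} (\<lambda>s. s * f s)"
    and sfr: "set_integrable lborel {0<..<1} (\<lambda>s. s * (f s * r s))"
    using f fr by (auto intro: set_integrable_unit_interval_mult_id)
  have expand: "(s - \<mu>) * (r s - r \<mu>) * f s
      = (s * (f s * r s) - \<mu> * (f s * r s)) - (r \<mu> * (s * f s) - (r \<mu> * \<mu>) * f s)" for s
    by (simp add: algebra_simps)
  have "\<mu> * (LBINT s:{0<..<1}. f s) = (LBINT s:{0<..<1}. s * f s)"
    using F by (simp add: \<mu>_def mean_prop_def)
  then have "(LBINT s:{0<..<1}. (s - \<mu>) * (r s - r \<mu>) * f s)
      = (LBINT s:{0<..<1}. s * (f s * r s)) - \<mu> * (LBINT s:{0<..<1}. f s * r s)"
    unfolding expand using f fr sf sfr by (simp add: mult.assoc)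
  then show ?thesis using H by (simp add: mean_prop_def diff_divide_distrib)
qed

lemma mean_prop_le_mean_prop_mult:
  fixes f r :: "real \<Rightarrow> real"
  assumes f: "set_integrable lborel {0<..<1} f"
    and fr: "set_integrable lborel {0<..<1} (\<lambda>s. f s * r s)"
    and f_pos: "\<And>s. s \<in> {0<..<1} \<Longrightarrow> f s > 0" and r_pos: "\<And>s. s \<in> {0<..<1} \<Longrightarrow> r s > 0"
    and mono: "\<And>s t. s \<in> {0<..<1} \<Longrightarrow> t \<in> {0<..<1} \<Longrightarrow> s \<le> t \<Longrightarrow> r s \<le> r t"
  shows "mean_prop f \<le> mean_prop (\<lambda>s. f s * r s)"
    and "(\<And>s t. s \<in> {0<..<1} \<Longrightarrow> t \<in> {0<..<1} \<Longrightarrow> s < t \<Longrightarrow> r s < r t)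
         \<Longrightarrow> mean_prop f < mean_prop (\<lambda>s. f s * r s)"
proof -
  define \<mu> where "\<mu> = mean_prop f"
  have \<mu>: "\<mu> \<in> {0<..<1}" and F: "(LBINT s:{0<..<1}. f s) > 0"
    using mean_prop_bounds[OF f f_pos] by (simp_all add: \<mu>_def)
  have H: "(LBINT s:{0<..<1}. f s * r s) > 0"
    using mean_prop_bounds[OF fr] f_pos r_pos by simp
  have cov_int: "set_integrable lborel {0<..<1} (\<lambda>s. (s - \<mu>) * (r s - r \<mu>) * f s)"
  proof -
    have "set_integrable lborel {0<..<1} (\<lambda>s. s * (f s * r s) - \<mu> * (f s * r s)
                                            - (r \<mu> * (s * f s) - (r \<mu> * \<mu>) * f s))"
      using f fr by (intro set_integral_diff set_integrable_mult_right set_integrable_unit_interval_mult_id)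
    then show ?thesis by (simp add: algebra_simps)
  qed
  have cov_nonneg: "(s - \<mu>) * (r s - r \<mu>) * f s \<ge> 0" if s: "s \<in> {0<..<1}" for s
  proof -
    have "0 \<le> (s - \<mu>) * (r s - r \<mu>)"
    proof (cases "s \<le> \<mu>")
      case True
      then show ?thesis using mono[OF s \<mu> True] by (intro mult_nonpos_nonpos) auto
    next
      case False
      then show ?thesis using mono[OF \<mu> s] by (intro mult_nonneg_nonneg) auto
    qed
    then show ?thesis using f_pos[OF s] by simp
  qed
  have diff: "mean_prop (\<lambda>s. f s * r s) - \<mu> =
      (LBINT s:{0<..<1}. (s - \<mu>) * (r s - r \<mu>) * f s) / (LBINT s:{0<..<1}. f s * r s)"
    using mean_prop_mult_minus_mean_prop[OF f fr] F H by (simp add: \<mu>_def)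
  have "(LBINT s:{0<..<1}. (s - \<mu>) * (r s - r \<mu>) * f s) \<ge> (LBINT s:{0<..<1::real}. (0::real))"
    by (rule set_integral_mono) (use cov_int cov_nonneg in \<open>auto simp: set_integrable_def\<close>)
  then have "mean_prop (\<lambda>s. f s * r s) - \<mu> \<ge> 0"
    unfolding diff using H by (simp add: divide_nonneg_pos)
  then show "mean_prop f \<le> mean_prop (\<lambda>s. f s * r s)" by (simp add: \<mu>_def)
  assume strict: "\<And>s t. s \<in> {0<..<1} \<Longrightarrow> t \<in> {0<..<1} \<Longrightarrow> s < t \<Longrightarrow> r s < r t"
  have "(s - \<mu>) * (r s - r \<mu>) * f s > 0" if s: "s \<in> {0<..<1}" "s \<noteq> \<mu>" for s
  proof -
    have "0 < (s - \<mu>) * (r s - r \<mu>)"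
    proof (cases "s < \<mu>")
      case True
      then show ?thesis using strict[OF s(1) \<mu> True] by (intro mult_neg_neg) auto
    next
      case False
      then show ?thesis using strict[OF \<mu> s(1)] s(2) by (intro mult_pos_pos) auto
    qed
    then show ?thesis using f_pos[OF s(1)] by simp
  qed
  then have "(LBINT s:{0<..<1}. (s - \<mu>) * (r s - r \<mu>) * f s) > 0"
    using cov_int cov_nonneg by (intro set_integral_unit_interval_pos[where c=\<mu>])
  then have "mean_prop (\<lambda>s. f s * r s) - \<mu> > 0"
    unfolding diff using H by (simp add: divide_pos_pos)
  then show "mean_prop f < mean_prop (\<lambda>s. f s * r s)" by (simp add: \<mu>_def)
qed

abbreviation product_lborel :: "'i set \<Rightarrow> ('i \<Rightarrow> real) measure" where
  "product_lborel I \<equiv> PiM I (\<lambda>_. lborel)"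

abbreviation unit_cube :: "'i set \<Rightarrow> ('i \<Rightarrow> real) set" where
  "unit_cube I \<equiv> PiE I (\<lambda>_. {0<..<1})"

definition cube_weight :: "'i set \<Rightarrow> ('i \<Rightarrow> real) \<Rightarrow> ('i \<Rightarrow> real) \<Rightarrow> real" where
  "cube_weight I c x = (\<Prod>i\<in>I. indicator {0<..<1} (x i) * (1 - x i) powr c i)"

lemma integrable_cube_weight:
  assumes "finite I" "\<And>i. i \<in> I \<Longrightarrow> c i > -1"
  shows "integrable (product_lborel I) (cube_weight I c)"
proof -
  interpret product_sigma_finite "\<lambda>_::'i. lborel :: real measure" by standard
  show ?thesis unfolding cube_weight_def
    using assms set_integrable_one_minus_powr
    by (intro product_integrable_prod) (auto simp: set_integrable_def mult.commute)
qed

lemma cube_weight_nonneg: "cube_weight I c x \<ge> 0"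
  unfolding cube_weight_def by (intro prod_nonneg) (auto simp: indicator_def)

lemma cube_weight_pos: "finite I \<Longrightarrow> x \<in> unit_cube I \<Longrightarrow> cube_weight I c x > 0"
  unfolding cube_weight_def by (intro prod_pos) (auto simp: indicator_def)

lemma cube_weight_eq_prod:
  "x \<in> unit_cube I \<Longrightarrow> cube_weight I c x = (\<Prod>i\<in>I. (1 - x i) powr c i)"
  unfolding cube_weight_def by (auto intro!: prod.cong simp: PiE_iff)

lemma cube_weight_eq_0:
  assumes "finite I" "x \<in> space (product_lborel I)" "x \<notin> unit_cube I"
  shows "cube_weight I c x = 0"
  using assms unfolding cube_weight_def space_PiM
  by (subst prod_zero_iff) (auto simp: PiE_iff indicator_def)

lemma unit_cube_in_sets: "finite I \<Longrightarrow> unit_cube I \<in> sets (product_lborel I)"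
  by (rule sets_PiM_I_finite) auto

lemma emeasure_unit_cube:
  assumes "finite I"
  shows "emeasure (product_lborel I) (unit_cube I) = 1"
proof -
  interpret product_sigma_finite "\<lambda>_::'i. lborel :: real measure" by standard
  show ?thesis using assms by (simp add: emeasure_PiM)
qed

lemma integrable_cube_weight_mult:
  fixes \<phi> :: "('i \<Rightarrow> real) \<Rightarrow> real"
  assumes I: "finite I" and c: "\<And>i. i \<in> I \<Longrightarrow> c i > -1"
    and meas: "\<phi> \<in> borel_measurable (product_lborel I)"
    and bound: "\<And>x. x \<in> unit_cube I \<Longrightarrow> \<bar>\<phi> x\<bar> \<le> K"
  shows "integrable (product_lborel I) (\<lambda>x. cube_weight I c x * \<phi> x)"
proof (rule Bochner_Integration.integrable_bound[OF _ _ AE_I2])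
  show "integrable (product_lborel I) (\<lambda>x. cube_weight I c x * K)"
    using integrable_cube_weight[OF I c] by simp
  show "(\<lambda>x. cube_weight I c x * \<phi> x) \<in> borel_measurable (product_lborel I)"
    using integrable_cube_weight[OF I c] meas by measurable
  fix x assume x: "x \<in> space (product_lborel I)"
  show "norm (cube_weight I c x * \<phi> x) \<le> norm (cube_weight I c x * K)"
  proof (cases "x \<in> unit_cube I")
    case True
    have "\<bar>\<phi> x\<bar> \<le> \<bar>K\<bar>" using bound[OF True] by linarith
    then show ?thesis using cube_weight_nonneg[of I c x] by (simp add: abs_mult mult_left_mono)
  qed (simp add: cube_weight_eq_0[OF I x])
qed

lemma cube_weight_integral_mono:
  assumes I: "finite I"
    and int: "integrable (product_lborel I) (\<lambda>x. cube_weight I c x * \<phi> x)"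
      "integrable (product_lborel I) (\<lambda>x. cube_weight I c x * \<psi> x)"
    and le: "\<And>x. x \<in> unit_cube I \<Longrightarrow> \<phi> x \<le> \<psi> x"
  shows "(\<integral>x. cube_weight I c x * \<phi> x \<partial>product_lborel I)
       \<le> (\<integral>x. cube_weight I c x * \<psi> x \<partial>product_lborel I)"
proof (rule integral_mono[OF int])
  fix x assume x: "x \<in> space (product_lborel I)"
  show "cube_weight I c x * \<phi> x \<le> cube_weight I c x * \<psi> x"
  proof (cases "x \<in> unit_cube I")
    case True
    then show ?thesis using le[OF True] cube_weight_nonneg by (intro mult_left_mono)
  qed (simp add: cube_weight_eq_0[OF I x])
qed

lemma cube_weight_integral_strict_mono:
  assumes I: "finite I"
    and int: "integrable (product_lborel I) (\<lambda>x. cube_weight I c x * \<phi> x)"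
      "integrable (product_lborel I) (\<lambda>x. cube_weight I c x * \<psi> x)"
    and less: "\<And>x. x \<in> unit_cube I \<Longrightarrow> \<phi> x < \<psi> x"
  shows "(\<integral>x. cube_weight I c x * \<phi> x \<partial>product_lborel I)
       < (\<integral>x. cube_weight I c x * \<psi> x \<partial>product_lborel I)"
proof (rule integral_less_if_less_on[OF int _ _ unit_cube_in_sets[OF I]])
  show "emeasure (product_lborel I) (unit_cube I) \<noteq> 0" using emeasure_unit_cube[OF I] by simp
  show "cube_weight I c x * \<phi> x < cube_weight I c x * \<psi> x" if "x \<in> unit_cube I" for x
    using less[OF that] cube_weight_pos[OF I that] by simp
  fix x assume x: "x \<in> space (product_lborel I)"
  show "cube_weight I c x * \<phi> x \<le> cube_weight I c x * \<psi> x"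
  proof (cases "x \<in> unit_cube I")
    case True
    then show ?thesis using less[OF True] cube_weight_nonneg by (intro mult_left_mono) auto
  qed (simp add: cube_weight_eq_0[OF I x])
qed

lemma cube_weight_integral_pos_bounded:
  assumes I: "finite I" and c: "\<And>i. i \<in> I \<Longrightarrow> c i > -1"
    and meas: "\<phi> \<in> borel_measurable (product_lborel I)"
    and bounds: "\<And>x. x \<in> unit_cube I \<Longrightarrow> 0 < \<phi> x \<and> \<phi> x \<le> K"
  shows "integrable (product_lborel I) (\<lambda>x. cube_weight I c x * \<phi> x)"
    and "0 < (\<integral>x. cube_weight I c x * \<phi> x \<partial>product_lborel I)"
    and "(\<integral>x. cube_weight I c x * \<phi> x \<partial>product_lborel I)
         \<le> K * (\<integral>x. cube_weight I c x \<partial>product_lborel I)"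
proof -
  show int: "integrable (product_lborel I) (\<lambda>x. cube_weight I c x * \<phi> x)"
  proof (rule integrable_cube_weight_mult[OF I c meas])
    fix x assume "x \<in> unit_cube I"
    then show "\<bar>\<phi> x\<bar> \<le> K" using bounds[of x] by simp
  qed
  have "(\<integral>x. cube_weight I c x * 0 \<partial>product_lborel I)
      < (\<integral>x. cube_weight I c x * \<phi> x \<partial>product_lborel I)"
    using bounds by (intro cube_weight_integral_strict_mono[OF I _ int]) auto
  then show "0 < (\<integral>x. cube_weight I c x * \<phi> x \<partial>product_lborel I)" by simp
  have "(\<integral>x. cube_weight I c x * \<phi> x \<partial>product_lborel I)
      \<le> (\<integral>x. cube_weight I c x * K \<partial>product_lborel I)"
    using bounds integrable_cube_weight[OF I c] by (intro cube_weight_integral_mono[OF I int]) auto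
  then show "(\<integral>x. cube_weight I c x * \<phi> x \<partial>product_lborel I)
      \<le> K * (\<integral>x. cube_weight I c x \<partial>product_lborel I)" by (simp add: mult.commute)
qed

lemma borel_measurable_cube_weight_integral:
  fixes \<phi> :: "real \<Rightarrow> ('i \<Rightarrow> real) \<Rightarrow> real"
  assumes I: "finite I" and c: "\<And>i. i \<in> I \<Longrightarrow> c i > -1"
    and meas: "(\<lambda>(s, x). \<phi> s x) \<in> borel_measurable (borel \<Otimes>\<^sub>M product_lborel I)"
  shows "(\<lambda>s. \<integral>x. cube_weight I c x * \<phi> s x \<partial>product_lborel I) \<in> borel_measurable borel"
proof -
  interpret product_sigma_finite "\<lambda>_::'i. lborel :: real measure" by standard
  interpret finite_product_sigma_finite "\<lambda>_::'i. lborel :: real measure" I by standard fact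
  have "cube_weight I c \<in> borel_measurable (product_lborel I)"
    using integrable_cube_weight[OF I c] by measurable
  then have "(\<lambda>(s, x). cube_weight I c x * \<phi> s x) \<in> borel_measurable (borel \<Otimes>\<^sub>M product_lborel I)"
    using meas by (simp add: case_prod_beta') measurable
  then show ?thesis by (rule borel_measurable_lebesgue_integral)
qed

definition weight_exponent :: "real \<Rightarrow> (nat \<Rightarrow> nat) \<Rightarrow> nat \<Rightarrow> real" where
  "weight_exponent a p i = (a + real (p i)) / 2 - 2"

lemma marginal_weight_mult:
  fixes a :: real and p :: "nat \<Rightarrow> nat"
  assumes m: "m \<in> {1..k}"
  defines "I \<equiv> {1..k} - {m}" and "c \<equiv> weight_exponent a p"
  shows "marginal k m (\<lambda>t. weight k a p t * q t) s
       = (1 - s) powr c m * (\<integral>x. cube_weight I c x * q (x(m := s)) \<partial>product_lborel I)"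
proof -
  have split: "{1..k} = insert m I" and m_notin: "m \<notin> I" and fin: "finite I"
    using m by (auto simp: I_def)
  have weight_upd: "weight k a p (x(m := s)) = (1 - s) powr c m * cube_weight I c x"
    if x: "x \<in> unit_cube I" for x
  proof -
    have "weight k a p (x(m := s)) = (1 - s) powr c m * (\<Prod>i\<in>I. (1 - x i) powr c i)"
      unfolding weight_def split c_def weight_exponent_def using m_notin fin
      by (simp add: prod.insert) (auto intro!: prod.cong)
    then show ?thesis by (simp add: cube_weight_eq_prod[OF x])
  qed
  have "marginal k m (\<lambda>t. weight k a p t * q t) s
      = (\<integral>x. (1 - s) powr c m * (cube_weight I c x * q (x(m := s))) \<partial>product_lborel I)"
    unfolding marginal_def set_lebesgue_integral_def I_def[symmetric]
  proof (rule Bochner_Integration.integral_cong[OF refl])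
    fix x assume x: "x \<in> space (product_lborel I)"
    show "indicator (unit_cube I) x *\<^sub>R (weight k a p (x(m := s)) * q (x(m := s)))
        = (1 - s) powr c m * (cube_weight I c x * q (x(m := s)))"
      by (cases "x \<in> unit_cube I") (simp_all add: weight_upd cube_weight_eq_0[OF fin x])
  qed
  then show ?thesis by simp
qed

lemma one_minus_powr_bounds:
  fixes e \<delta> L :: real
  assumes "e \<le> 0" "\<delta> > 0" "L \<le> 1 - \<delta>"
  shows "0 < (1 - L) powr e" and "(1 - L) powr e \<le> \<delta> powr e"
  using assms powr_mono2'[of e \<delta> "1 - L"] by auto

lemma one_minus_powr_mono:
  fixes e L L' :: real
  assumes "e \<le> 0" "L \<le> L'" "L' < 1"
  shows "(1 - L) powr e \<le> (1 - L') powr e"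
  using assms by (intro powr_mono2') auto

lemma one_minus_powr_strict_mono:
  fixes e L L' :: real
  assumes "e < 0" "L < L'" "L' < 1"
  shows "(1 - L) powr e < (1 - L') powr e"
  using assms by (intro powr_less_mono2_neg) auto

locale marginal_comparison =
  fixes k n m j :: nat and a :: real and p :: "nat \<Rightarrow> nat" and R2 :: "nat \<Rightarrow> real"
  assumes a_gt_2: "a > 2" and n_ge_2: "n \<ge> 2"
    and p_pos: "\<forall>i\<in>{1..k}. p i > 0"
    and R2_nonneg: "\<forall>i\<in>{1..k}. R2 i \<ge> 0"
    and R2_sum_less_1: "(\<Sum>i\<in>{1..k}. R2 i) < 1"
    and m_index: "m \<in> {1..k}" and j_index: "j \<in> {1..k}"
begin

abbreviation others :: "nat set" where "others \<equiv> {1..k} - {m}"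

abbreviation e :: real where "e \<equiv> - (real n - 1) / 2"

(* \<delta> bounds every base 1 - \<Sum> t_i R_i^2 of the power e = -(n-1)/2 away from 0. *)
abbreviation \<delta> :: real where "\<delta> \<equiv> 1 - (\<Sum>i\<in>{1..k}. R2 i)"

abbreviation M :: "(nat \<Rightarrow> real) measure" where "M \<equiv> product_lborel others"

abbreviation w :: "(nat \<Rightarrow> real) \<Rightarrow> real" where "w \<equiv> cube_weight others (weight_exponent a p)"

abbreviation total_weight :: real where "total_weight \<equiv> \<integral>x. w x \<partial>M"

definition lin :: "(nat \<Rightarrow> real) \<Rightarrow> real" where
  "lin x = (\<Sum>i\<in>others. x i * R2 i)"

definition \<phi>1 :: "real \<Rightarrow> (nat \<Rightarrow> real) \<Rightarrow> real" where
  "\<phi>1 s x = (1 - (s * R2 m + lin x)) powr e"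

definition \<phi>2 :: "real \<Rightarrow> (nat \<Rightarrow> real) \<Rightarrow> real" where
  "\<phi>2 s x = (1 - (if j = m then s else x j) * R2 j) powr e"

definition h1 :: "real \<Rightarrow> real" where
  "h1 s = (\<integral>x. w x * \<phi>1 s x \<partial>M)"

definition h2 :: "real \<Rightarrow> real" where
  "h2 s = (\<integral>x. w x * \<phi>2 s x \<partial>M)"

lemma weight_exponent_gt: "i \<in> {1..k} \<Longrightarrow> weight_exponent a p i > -1"
  using p_pos a_gt_2 by (fastforce simp: weight_exponent_def)

lemmas finite_others = finite_Diff[OF finite_atLeastAtMost, of 1 k "{m}"]
lemmas weight_exponent_gt_others = weight_exponent_gt[OF DiffD1[where B="{m}"]]

lemma e_neg: "e < 0"
  using n_ge_2 by simp

lemma \<delta>_pos: "\<delta> > 0"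
  using R2_sum_less_1 by simp

lemma R2_le: "i \<in> {1..k} \<Longrightarrow> R2 i \<le> 1 - \<delta>"
  using R2_nonneg member_le_sum[of i "{1..k}" R2] by auto

lemma lin_bounds:
  assumes "x \<in> unit_cube others" "s \<in> {0<..<1}"
  shows "0 \<le> lin x" and "s * R2 m + lin x \<le> 1 - \<delta>"
proof -
  have x: "\<And>i. i \<in> others \<Longrightarrow> 0 < x i \<and> x i < 1" using assms(1) by (auto simp: PiE_iff)
  have R: "\<And>i. i \<in> {1..k} \<Longrightarrow> R2 i \<ge> 0" using R2_nonneg by auto
  show "0 \<le> lin x" unfolding lin_def using x R by (intro sum_nonneg) (simp add: less_imp_le)
  have "lin x \<le> (\<Sum>i\<in>others. R2 i)" unfolding lin_def using x R
    by (intro sum_mono mult_left_le_one_le) (auto simp: less_imp_le)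
  moreover have "s * R2 m \<le> R2 m" using assms(2) R m_index by (intro mult_left_le_one_le) auto
  moreover have "(\<Sum>i\<in>{1..k}. R2 i) = R2 m + (\<Sum>i\<in>others. R2 i)"
    using m_index by (simp add: sum.remove)
  ultimately show "s * R2 m + lin x \<le> 1 - \<delta>" by simp
qed

lemma \<phi>1_bounds: "x \<in> unit_cube others \<Longrightarrow> s \<in> {0<..<1} \<Longrightarrow> 0 < \<phi>1 s x \<and> \<phi>1 s x \<le> \<delta> powr e"
  unfolding \<phi>1_def using one_minus_powr_bounds[OF less_imp_le[OF e_neg] \<delta>_pos] lin_bounds by blast

lemma \<phi>2_bounds: "x \<in> unit_cube others \<Longrightarrow> s \<in> {0<..<1} \<Longrightarrow> 0 < \<phi>2 s x \<and> \<phi>2 s x \<le> \<delta> powr e"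
proof -
  assume x: "x \<in> unit_cube others" and s: "s \<in> {0<..<1}"
  define t where "t = (if j = m then s else x j)"
  have "t \<in> {0<..<1}" using x s j_index by (auto simp: t_def PiE_iff)
  then have "t * R2 j \<le> R2 j" using R2_nonneg j_index by (intro mult_left_le_one_le) auto
  then have "t * R2 j \<le> 1 - \<delta>" using R2_le[OF j_index] by linarith
  then show ?thesis unfolding \<phi>2_def t_def[symmetric]
    using one_minus_powr_bounds[OF less_imp_le[OF e_neg] \<delta>_pos] by blast
qed

lemma \<phi>1_measurable:
  "(\<lambda>(s, x). \<phi>1 s x) \<in> borel_measurable (borel \<Otimes>\<^sub>M M)"
  unfolding \<phi>1_def lin_def by measurable

lemma \<phi>1_measurable_section: "\<phi>1 s \<in> borel_measurable M"
  using measurable_Pair2[OF \<phi>1_measurable, of s] by simp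

lemma \<phi>2_measurable:
  "(\<lambda>(s, x). \<phi>2 s x) \<in> borel_measurable (borel \<Otimes>\<^sub>M M)"
proof (cases "j = m")
  case False
  then have "j \<in> others" using j_index by simp
  then show ?thesis unfolding \<phi>2_def using False by simp measurable
next
  case True
  then show ?thesis unfolding \<phi>2_def by simp measurable
qed

lemma \<phi>2_measurable_section: "\<phi>2 s \<in> borel_measurable M"
  using measurable_Pair2[OF \<phi>2_measurable, of s] by simp

lemma h1_bounds:
  assumes "s \<in> {0<..<1}"
  shows "integrable M (\<lambda>x. w x * \<phi>1 s x)"
    and "0 < h1 s" and "h1 s \<le> \<delta> powr e * total_weight"
  using cube_weight_integral_pos_bounded[OF finite_others weight_exponent_gt_others
      \<phi>1_measurable_section \<phi>1_bounds[OF _ assms]]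
  unfolding h1_def by auto

lemma h2_bounds:
  assumes "s \<in> {0<..<1}"
  shows "integrable M (\<lambda>x. w x * \<phi>2 s x)"
    and "0 < h2 s" and "h2 s \<le> \<delta> powr e * total_weight"
  using cube_weight_integral_pos_bounded[OF finite_others weight_exponent_gt_others
      \<phi>2_measurable_section \<phi>2_bounds[OF _ assms]]
  unfolding h2_def by auto

lemma h1_measurable: "h1 \<in> borel_measurable borel"
  unfolding h1_def[abs_def]
  by (rule borel_measurable_cube_weight_integral[OF finite_others weight_exponent_gt_others \<phi>1_measurable])

lemma h2_measurable: "h2 \<in> borel_measurable borel"
  unfolding h2_def[abs_def]
  by (rule borel_measurable_cube_weight_integral[OF finite_others weight_exponent_gt_others \<phi>2_measurable])

lemma marginal_g1: "marginal k m (g1 k a n p R2) s = (1 - s) powr weight_exponent a p m * h1 s"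
proof -
  have "(\<Sum>i\<in>{1..k}. (x(m := s)) i * R2 i) = s * R2 m + lin x" for x
    using m_index by (simp add: sum.remove lin_def)
  then have "g1 k a n p R2 = (\<lambda>t. weight k a p t * (1 - (\<Sum>i\<in>{1..k}. t i * R2 i)) powr e)"
    and "\<phi>1 s = (\<lambda>x. (1 - (\<Sum>i\<in>{1..k}. (x(m := s)) i * R2 i)) powr e)"
    by (simp_all add: fun_eq_iff g1_def \<phi>1_def)
  then show ?thesis by (simp add: marginal_weight_mult[OF m_index] h1_def)
qed

lemma marginal_g2: "marginal k m (g2 k a n p R2 j) s = (1 - s) powr weight_exponent a p m * h2 s"
proof -
  have "g2 k a n p R2 j = (\<lambda>t. weight k a p t * (1 - t j * R2 j) powr e)"
    and "\<phi>2 s = (\<lambda>x. (1 - (x(m := s)) j * R2 j) powr e)"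
    by (simp_all add: fun_eq_iff g2_def \<phi>2_def)
  then show ?thesis by (simp add: marginal_weight_mult[OF m_index] h2_def)
qed

lemma lin_pos:
  assumes "x \<in> unit_cube others" and "\<exists>i\<in>others. R2 i > 0"
  shows "lin x > 0"
proof -
  obtain i where i: "i \<in> others" "R2 i > 0" using assms(2) by blast
  have "0 \<le> x l * R2 l" if "l \<in> others" for l
    using assms(1) R2_nonneg that by (auto simp: PiE_iff less_imp_le)
  moreover have "0 < x i * R2 i" using assms(1) i by (auto simp: PiE_iff)
  ultimately show ?thesis unfolding lin_def using i(1) by (intro sum_pos2[where i=i]) auto
qed

lemma h1_mono:
  assumes s: "s \<in> {0<..<1}" and t: "t \<in> {0<..<1}" and "s \<le> t"
  shows "h1 s \<le> h1 t" and "R2 m > 0 \<Longrightarrow> s < t \<Longrightarrow> h1 s < h1 t"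
proof -
  have R2m: "R2 m \<ge> 0" using R2_nonneg m_index by simp
  have below: "t * R2 m + lin x < 1" if "x \<in> unit_cube others" for x
    using lin_bounds(2)[OF that t] \<delta>_pos by linarith
  have "s * R2 m \<le> t * R2 m" using assms(3) R2m by (rule mult_right_mono)
  then have "\<phi>1 s x \<le> \<phi>1 t x" if "x \<in> unit_cube others" for x
    unfolding \<phi>1_def using below[OF that] e_neg by (intro one_minus_powr_mono) auto
  then show "h1 s \<le> h1 t"
    unfolding h1_def by (intro cube_weight_integral_mono[OF finite_others h1_bounds(1)[OF s] h1_bounds(1)[OF t]])
  assume "R2 m > 0" "s < t"
  then have "\<phi>1 s x < \<phi>1 t x" if "x \<in> unit_cube others" for x
    unfolding \<phi>1_def using below[OF that] e_neg by (intro one_minus_powr_strict_mono) auto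
  then show "h1 s < h1 t"
    unfolding h1_def by (intro cube_weight_integral_strict_mono[OF finite_others h1_bounds(1)[OF s] h1_bounds(1)[OF t]])
qed

(* For j = m the factor (1 - s R_m^2) powr e of h2 can be divided out of h1, leaving \<psi>. *)
definition \<psi> :: "real \<Rightarrow> (nat \<Rightarrow> real) \<Rightarrow> real" where
  "\<psi> s x = (1 - lin x / (1 - s * R2 m)) powr e"

lemma one_minus_mult_R2_m_pos: "s \<in> {0<..<1} \<Longrightarrow> 1 - s * R2 m > 0"
  using R2_le[OF m_index] R2_nonneg m_index \<delta>_pos mult_left_le_one_le[of "R2 m" s] by auto

lemma h1_eq_scaled:
  assumes s: "s \<in> {0<..<1}"
  shows "integrable M (\<lambda>x. w x * \<psi> s x)"
    and "h1 s = (1 - s * R2 m) powr e * (\<integral>x. w x * \<psi> s x \<partial>M)"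
proof -
  have pos: "1 - s * R2 m > 0" using one_minus_mult_R2_m_pos[OF s] .
  have "\<psi> s x = \<phi>1 s x / (1 - s * R2 m) powr e" if "x \<in> unit_cube others" for x
  proof -
    have "0 \<le> 1 - (s * R2 m + lin x)" using lin_bounds(2)[OF that s] \<delta>_pos by linarith
    moreover have "1 - lin x / (1 - s * R2 m) = (1 - (s * R2 m + lin x)) / (1 - s * R2 m)"
      using pos by (simp add: field_simps)
    ultimately show ?thesis unfolding \<psi>_def \<phi>1_def using pos by (simp add: powr_divide)
  qed
  then have eq: "w x * \<psi> s x = w x * \<phi>1 s x / (1 - s * R2 m) powr e"
    if "x \<in> space M" for x
    using cube_weight_eq_0[OF finite_others that] by (cases "x \<in> unit_cube others") auto
  show "integrable M (\<lambda>x. w x * \<psi> s x)"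
    by (rule Bochner_Integration.integrable_cong[THEN iffD2, OF refl eq]) (blast, intro integrable_divide_zero h1_bounds(1)[OF s])
  show "h1 s = (1 - s * R2 m) powr e * (\<integral>x. w x * \<psi> s x \<partial>M)"
  proof -
    have "(\<integral>x. w x * \<psi> s x \<partial>M)
        = (\<integral>x. w x * \<phi>1 s x / (1 - s * R2 m) powr e \<partial>M)"
      by (rule Bochner_Integration.integral_cong[OF refl eq])
    also have "\<dots> = h1 s / (1 - s * R2 m) powr e" unfolding h1_def by simp
    finally show ?thesis using pos by simp
  qed
qed

lemma h2_eq_diagonal: "j = m \<Longrightarrow> h2 s = (1 - s * R2 m) powr e * total_weight"
  unfolding h2_def \<phi>2_def by simp

lemma \<psi>_mono:
  assumes x: "x \<in> unit_cube others" and s: "s \<in> {0<..<1}" and t: "t \<in> {0<..<1}" and "s \<le> t"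
  shows "\<psi> s x \<le> \<psi> t x" and "R2 m > 0 \<Longrightarrow> lin x > 0 \<Longrightarrow> s < t \<Longrightarrow> \<psi> s x < \<psi> t x"
proof -
  have pos: "1 - t * R2 m > 0" using one_minus_mult_R2_m_pos[OF t] .
  have le: "1 - t * R2 m \<le> 1 - s * R2 m"
    using mult_right_mono[OF assms(4), of "R2 m"] R2_nonneg m_index by simp
  have below: "lin x / (1 - t * R2 m) < 1"
    using lin_bounds(2)[OF x t] \<delta>_pos pos by (simp add: field_simps)
  have "lin x / (1 - s * R2 m) \<le> lin x / (1 - t * R2 m)"
    using lin_bounds(1)[OF x s] pos le by (intro divide_left_mono) auto
  then show "\<psi> s x \<le> \<psi> t x" unfolding \<psi>_def using below e_neg by (intro one_minus_powr_mono) auto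
  assume "R2 m > 0" "lin x > 0" "s < t"
  then have "lin x / (1 - s * R2 m) < lin x / (1 - t * R2 m)"
    using pos one_minus_mult_R2_m_pos[OF s] by (intro divide_strict_left_mono) (auto intro: mult_pos_pos)
  then show "\<psi> s x < \<psi> t x" unfolding \<psi>_def using below e_neg by (intro one_minus_powr_strict_mono) auto
qed

lemma ratio_eq_diagonal:
  assumes "j = m" and s: "s \<in> {0<..<1}"
  shows "h1 s / h2 s = (\<integral>x. w x * \<psi> s x \<partial>M) / total_weight"
  using h1_eq_scaled(2)[OF s] h2_eq_diagonal[OF assms(1), of s] one_minus_mult_R2_m_pos[OF s] by simp

lemma total_weight_pos: "total_weight > 0"
  using cube_weight_integral_pos_bounded(2)[OF finite_others weight_exponent_gt_others, where \<phi>="\<lambda>_. 1" and K=1]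
  by simp

lemma ratio_mono:
  assumes s: "s \<in> {0<..<1}" and t: "t \<in> {0<..<1}" and st: "s \<le> t"
  shows "h1 s / h2 s \<le> h1 t / h2 t"
    and "R2 m > 0 \<Longrightarrow> \<exists>i\<in>others. R2 i > 0 \<Longrightarrow> s < t \<Longrightarrow> h1 s / h2 s < h1 t / h2 t"
proof -
  have both: "h1 s / h2 s \<le> h1 t / h2 t \<and>
      (R2 m > 0 \<and> (\<exists>i\<in>others. R2 i > 0) \<and> s < t \<longrightarrow> h1 s / h2 s < h1 t / h2 t)"
  proof (cases "j = m")
    case False
    then have "h2 s = h2 t" unfolding h2_def \<phi>2_def by simp
    then show ?thesis using h1_mono[OF s t st] h2_bounds(2)[OF t]
      by (auto intro: divide_right_mono divide_strict_right_mono)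
  next
    case True
    note int = h1_eq_scaled(1)
    have "(\<integral>x. w x * \<psi> s x \<partial>M) \<le> (\<integral>x. w x * \<psi> t x \<partial>M)"
      using \<psi>_mono(1)[OF _ s t st] by (intro cube_weight_integral_mono[OF finite_others int[OF s] int[OF t]])
    moreover have "(\<integral>x. w x * \<psi> s x \<partial>M) < (\<integral>x. w x * \<psi> t x \<partial>M)"
      if "R2 m > 0" "\<exists>i\<in>others. R2 i > 0" "s < t"
      using \<psi>_mono(2)[OF _ s t st] lin_pos that
      by (intro cube_weight_integral_strict_mono[OF finite_others int[OF s] int[OF t]]) blast
    ultimately show ?thesis unfolding ratio_eq_diagonal[OF True s] ratio_eq_diagonal[OF True t]
      using total_weight_pos by (auto intro: divide_right_mono divide_strict_right_mono)
  qed
  then show "h1 s / h2 s \<le> h1 t / h2 t" by (rule conjunct1)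
  show "h1 s / h2 s < h1 t / h2 t" if "R2 m > 0" "\<exists>i\<in>others. R2 i > 0" "s < t"
    using both that by simp
qed

lemma mean_prop_marginal_le:
  shows "mean_prop (marginal k m (g2 k a n p R2 j)) \<le> mean_prop (marginal k m (g1 k a n p R2))"
    and "R2 m > 0 \<Longrightarrow> \<exists>i\<in>others. R2 i > 0 \<Longrightarrow>
         mean_prop (marginal k m (g2 k a n p R2 j)) < mean_prop (marginal k m (g1 k a n p R2))"
proof -
  define f where "f s = (1 - s) powr weight_exponent a p m * h2 s" for s
  define r where "r s = h1 s / h2 s" for s
  have g2: "marginal k m (g2 k a n p R2 j) = f"
    by (simp add: fun_eq_iff f_def marginal_g2)
  have g1: "mean_prop (marginal k m (g1 k a n p R2)) = mean_prop (\<lambda>s. f s * r s)"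
    by (rule mean_prop_cong) (simp add: marginal_g1 f_def r_def h2_bounds(2) less_imp_neq[symmetric])
  have bounded: "set_integrable lborel {0<..<1} (\<lambda>s. (1 - s) powr weight_exponent a p m * h s)"
    if "h \<in> borel_measurable borel" "\<And>s. s \<in> {0<..<1} \<Longrightarrow> 0 < h s \<and> h s \<le> \<delta> powr e * total_weight" for h
  proof (rule set_integrable_one_minus_powr_mult_bounded[OF weight_exponent_gt[OF m_index] that(1)])
    fix s :: real assume "s \<in> {0<..<1}"
    then show "\<bar>h s\<bar> \<le> \<delta> powr e * total_weight" using that(2)[of s] by simp
  qed
  have f_int: "set_integrable lborel {0<..<1} f"
    unfolding f_def using h2_bounds(2,3) by (intro bounded[OF h2_measurable]) auto
  have fr_int: "set_integrable lborel {0<..<1} (\<lambda>s. f s * r s)"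
  proof (rule set_integrable_cong[THEN iffD2, OF refl refl])
    show "set_integrable lborel {0<..<1} (\<lambda>s. (1 - s) powr weight_exponent a p m * h1 s)"
      using h1_bounds(2,3) by (intro bounded[OF h1_measurable]) auto
  qed (simp add: f_def r_def h2_bounds(2) less_imp_neq[symmetric])
  have f_pos: "f s > 0" and r_pos: "r s > 0" if "s \<in> {0<..<1}" for s
    using h1_bounds(2)[OF that] h2_bounds(2)[OF that] that by (simp_all add: f_def r_def)
  have mono: "r s \<le> r t" if "s \<in> {0<..<1}" "t \<in> {0<..<1}" "s \<le> t" for s t
    using ratio_mono(1)[OF that] by (simp add: r_def)
  show "mean_prop (marginal k m (g2 k a n p R2 j)) \<le> mean_prop (marginal k m (g1 k a n p R2))"
    unfolding g1 g2 by (rule mean_prop_le_mean_prop_mult(1)[OF f_int fr_int]) (use f_pos r_pos mono in auto)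
  show "mean_prop (marginal k m (g2 k a n p R2 j)) < mean_prop (marginal k m (g1 k a n p R2))"
    if R2_pos: "R2 m > 0" "\<exists>i\<in>others. R2 i > 0"
  proof -
    have strict: "r s < r t" if "s \<in> {0<..<1}" "t \<in> {0<..<1}" "s < t" for s t
      using ratio_mono(2)[OF that(1,2) less_imp_le[OF that(3)] R2_pos that(3)] by (simp add: r_def)
    show ?thesis unfolding g1 g2
      by (rule mean_prop_le_mean_prop_mult(2)[OF f_int fr_int]) (use f_pos r_pos mono strict in auto)
  qed
qed

end

theorem lemma4p2:
  fixes k n m j :: nat and a :: real and p :: "nat \<Rightarrow> nat" and R2 :: "nat \<Rightarrow> real"
  assumes "k \<ge> 2" and "a > 2" and "n \<ge> 2"
    and "\<forall>i\<in>{1..k}. p i > 0"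
    and "\<forall>i\<in>{1..k}. R2 i \<ge> 0"
    and "(\<Sum>i\<in>{1..k}. R2 i) < 1"
    and "m \<in> {1..k}" and "j \<in> {1..k}"
  shows "mean_prop (marginal k m (g1 k a n p R2)) \<ge> mean_prop (marginal k m (g2 k a n p R2 j))
       \<and> ((R2 m > 0 \<and> (\<exists>i\<in>{1..k} - {m}. R2 i > 0)) \<longrightarrow>
           mean_prop (marginal k m (g1 k a n p R2)) > mean_prop (marginal k m (g2 k a n p R2 j)))"
proof -
  interpret marginal_comparison k n m j a p R2
    using assms(2-8) by unfold_locales
  show ?thesis using mean_prop_marginal_le by auto
qed

end
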